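(* For every sufficiently large integer $m$ there exist two curves $\sigma,\tau$ of complexity $m$ with vertices in $\mathbb{R}$ such that the only traversal realizing $d_{DTW}(\sigma,\tau)$ has length $2m-5$, and for every $k\le m-3$ there exists a traversal realizing $d_{k\text{-}DTW}(\sigma,\tau)$ of length $m+1$.
   Context: For curves $\sigma=(v_1,\dots,v_{m'})$, $\tau=(w_1,\dots,w_{m''})$, a traversal $T$ is a sequence of index pairs starting with $(1,1)$, ending with $(m',m'')$, each $(i,j)$ followed only by $(i+1,j)$, $(i,j+1)$ or $(i+1,j+1)$; its length is its number of pairs. $d_{DTW}(\sigma,\tau)=\min_T\sum_{(i,j)\in T}|v_i-w_j|$. With $s^{(T)}_1\ge s^{(T)}_2\ge\dots$ the matched distances sorted non-increasingly (zeros beyond $|T|$), $d_{k\text{-}DTW}(\sigma,\tau)=\min_T\sum_{l=1}^k s^{(T)}_l$. A traversal realizes a distance if it attains the minimum. *)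

theory Defs
  imports Complex_Main
begin

text \<open>Curves are lists of real vertices; index pairs are 1-based as in the paper:
  the pair (i,j) matches vertex i of sigma (sigma ! (i-1)) with vertex j of tau.\<close>

definition trav_step :: "nat \<times> nat \<Rightarrow> nat \<times> nat \<Rightarrow> bool" where
  "trav_step p q \<longleftrightarrow>
     q = (fst p + 1, snd p) \<or> q = (fst p, snd p + 1) \<or> q = (fst p + 1, snd p + 1)"

definition is_traversal :: "real list \<Rightarrow> real list \<Rightarrow> (nat \<times> nat) list \<Rightarrow> bool" where
  "is_traversal \<sigma> \<tau> T \<longleftrightarrow>
     T \<noteq> [] \<and> hd T = (1, 1) \<and> last T = (length \<sigma>, length \<tau>) \<and>
     (\<forall>i. i + 1 < length T \<longrightarrow> trav_step (T ! i) (T ! (i + 1)))"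

definition matched_dists :: "real list \<Rightarrow> real list \<Rightarrow> (nat \<times> nat) list \<Rightarrow> real list" where
  "matched_dists \<sigma> \<tau> T = map (\<lambda>(i, j). \<bar>\<sigma> ! (i - 1) - \<tau> ! (j - 1)\<bar>) T"

definition dtw_cost :: "real list \<Rightarrow> real list \<Rightarrow> (nat \<times> nat) list \<Rightarrow> real" where
  "dtw_cost \<sigma> \<tau> T = sum_list (matched_dists \<sigma> \<tau> T)"

definition kdtw_cost :: "nat \<Rightarrow> real list \<Rightarrow> real list \<Rightarrow> (nat \<times> nat) list \<Rightarrow> real" where
  "kdtw_cost k \<sigma> \<tau> T = sum_list (take k (rev (sort (matched_dists \<sigma> \<tau> T))))"

definition d_DTW :: "real list \<Rightarrow> real list \<Rightarrow> real" where
  "d_DTW \<sigma> \<tau> = Min {dtw_cost \<sigma> \<tau> T | T. is_traversal \<sigma> \<tau> T}"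

definition d_kDTW :: "nat \<Rightarrow> real list \<Rightarrow> real list \<Rightarrow> real" where
  "d_kDTW k \<sigma> \<tau> = Min {kdtw_cost k \<sigma> \<tau> T | T. is_traversal \<sigma> \<tau> T}"

definition realizes_DTW :: "real list \<Rightarrow> real list \<Rightarrow> (nat \<times> nat) list \<Rightarrow> bool" where
  "realizes_DTW \<sigma> \<tau> T \<longleftrightarrow> is_traversal \<sigma> \<tau> T \<and> dtw_cost \<sigma> \<tau> T = d_DTW \<sigma> \<tau>"

definition realizes_kDTW :: "nat \<Rightarrow> real list \<Rightarrow> real list \<Rightarrow> (nat \<times> nat) list \<Rightarrow> bool" where
  "realizes_kDTW k \<sigma> \<tau> T \<longleftrightarrow> is_traversal \<sigma> \<tau> T \<and> kdtw_cost k \<sigma> \<tau> T = d_kDTW k \<sigma> \<tau>"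

end

(* For m = n + 5 take sigma = (0, 2^n, 0, 1, 0, 1) and tau = (1^n, 0, 2, 0, 2, 0), so that all
   matched distances lie in {0, 1, 2}; call a matched pair heavy if its distance is at least 1.
   An explicit table G of the least number of heavy pairs on a lattice path from (1,1) to (i,j)
   satisfies G q <= G p + [q heavy] for every step p -> q, so every traversal has at least
   G (m, m) = n + 2 heavy pairs and hence DTW cost at least n + 2.  This bound is attained by the
   traversal of length 2m - 5 that matches the first vertex of sigma with the first n + 1 vertices
   of tau, then the block 2^n with the first 2 of tau, and then runs diagonally.  On a traversal of
   cost n + 2 every step is tight for G, and a tight step into a cell of that optimal traversal
   can only come from its predecessor there, so the optimum is unique.  For k <= n + 2 = m - 3 the
   k largest distances of any traversal therefore sum to at least k, while the near-diagonal
   traversal (1,1), (2,1), (3,2), ..., (m, m - 1), (m, m) of length m + 1 has all distances at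
   most 1. *)

theory Submission
  imports Defs
begin

inductive lattice_path :: "(nat \<times> nat) list \<Rightarrow> bool" where
  start: "lattice_path [(1, 1)]"
| snoc: "lattice_path P \<Longrightarrow> trav_step (last P) q \<Longrightarrow> lattice_path (P @ [q])"

lemma lattice_path_iff:
  "lattice_path P \<longleftrightarrow> P \<noteq> [] \<and> hd P = (1, 1) \<and> successively trav_step P"
proof
  show "lattice_path P \<Longrightarrow> P \<noteq> [] \<and> hd P = (1, 1) \<and> successively trav_step P"
    by (induction rule: lattice_path.induct) (auto simp: successively_append_iff)
next
  show "P \<noteq> [] \<and> hd P = (1, 1) \<and> successively trav_step P \<Longrightarrow> lattice_path P"
  proof (induction P rule: rev_induct)
    case (snoc q P)
    show ?case
    proof (cases "P = []")
      case True
      then show ?thesis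
        using snoc.prems lattice_path.start by simp
    next
      case False
      then show ?thesis
        using snoc by (auto simp: successively_append_iff intro: lattice_path.snoc)
    qed
  qed simp
qed

lemma is_traversal_iff:
  "is_traversal \<sigma> \<tau> T \<longleftrightarrow> lattice_path T \<and> last T = (length \<sigma>, length \<tau>)"
  by (auto simp: is_traversal_def lattice_path_iff successively_conv_nth)

lemma successively_upt:
  "successively P [a..<b] \<longleftrightarrow> (\<forall>i. a \<le> i \<longrightarrow> Suc i < b \<longrightarrow> P i (Suc i))"
proof -
  have "(\<forall>k. Suc k < b - a \<longrightarrow> P (a + k) (Suc (a + k))) \<longleftrightarrow>
        (\<forall>i. a \<le> i \<longrightarrow> Suc i < b \<longrightarrow> P i (Suc i))"
  proof (intro iffI allI impI)
    fix i assume H: "\<forall>k. Suc k < b - a \<longrightarrow> P (a + k) (Suc (a + k))" and "a \<le> i" "Suc i < b"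
    then have "Suc (i - a) < b - a" and i: "a + (i - a) = i" by linarith+
    then show "P i (Suc i)" using H by metis
  next
    fix k assume "\<forall>i. a \<le> i \<longrightarrow> Suc i < b \<longrightarrow> P i (Suc i)" "Suc k < b - a"
    then show "P (a + k) (Suc (a + k))" by simp
  qed
  then show ?thesis
    by (simp add: successively_conv_nth)
qed

lemma trav_step_mono:
  "trav_step p q \<Longrightarrow> fst p \<le> fst q \<and> snd p \<le> snd q \<and> fst p + snd p < fst q + snd q"
  by (auto simp: trav_step_def)

lemma lattice_path_coords:
  "lattice_path P \<Longrightarrow> x \<in> set P \<Longrightarrow>
     1 \<le> fst x \<and> 1 \<le> snd x \<and> fst x \<le> fst (last P) \<and> snd x \<le> snd (last P)"
proof (induction arbitrary: x rule: lattice_path.induct)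
  case (snoc P q)
  have "last P \<in> set P"
    using snoc.hyps(1) by (cases rule: lattice_path.cases) auto
  then have "1 \<le> fst q \<and> 1 \<le> snd q"
    using snoc.IH trav_step_mono[OF snoc.hyps(2)] by fastforce
  then show ?case
    using snoc trav_step_mono[OF snoc.hyps(2)] by fastforce
qed simp

lemma lattice_path_last_ge_1:
  "lattice_path P \<Longrightarrow> 1 \<le> fst (last P) \<and> 1 \<le> snd (last P)"
  using lattice_path_coords[of P "last P"] by (auto simp: lattice_path_iff)

lemma lattice_path_length:
  "lattice_path P \<Longrightarrow> length P + 1 \<le> fst (last P) + snd (last P)"
  by (induction rule: lattice_path.induct) (auto dest: trav_step_mono)

lemma lattice_path_last_start:
  assumes "lattice_path P" "last P = (1, 1)"
  shows "P = [(1, 1)]"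
proof -
  have "length P \<le> 1"
    using lattice_path_length[OF assms(1)] assms(2) by simp
  with assms show ?thesis
    by (cases P) (auto simp: lattice_path_iff)
qed

lemma finite_traversals: "finite {T. is_traversal \<sigma> \<tau> T}"
proof (rule finite_subset)
  let ?m = "length \<sigma>" and ?n = "length \<tau>"
  show "{T. is_traversal \<sigma> \<tau> T} \<subseteq> {xs. set xs \<subseteq> {1..?m} \<times> {1..?n} \<and> length xs \<le> ?m + ?n}"
    using lattice_path_coords lattice_path_length
    by (fastforce simp: is_traversal_iff)
  show "finite {xs. set xs \<subseteq> {1..?m} \<times> {1..?n} \<and> length xs \<le> ?m + ?n}"
    by (rule finite_lists_length_le) simp
qed

locale lattice_potential =
  fixes G W :: "nat \<times> nat \<Rightarrow> real" and N :: nat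
  assumes potential_start: "G (1, 1) \<le> W (1, 1)"
    and potential_step: "\<And>p q. trav_step p q \<Longrightarrow> 1 \<le> fst p \<Longrightarrow> 1 \<le> snd p \<Longrightarrow>
           fst q \<le> N \<Longrightarrow> snd q \<le> N \<Longrightarrow> G q \<le> G p + W q"
begin

lemma potential_le_path_weight:
  "lattice_path P \<Longrightarrow> fst (last P) \<le> N \<Longrightarrow> snd (last P) \<le> N \<Longrightarrow>
     G (last P) \<le> sum_list (map W P)"
proof (induction rule: lattice_path.induct)
  case (snoc P q)
  have "G q \<le> G (last P) + W q"
    using potential_step[OF snoc.hyps(2)] lattice_path_last_ge_1[OF snoc.hyps(1)] snoc.prems by simp
  moreover have "G (last P) \<le> sum_list (map W P)"
    using snoc.IH snoc.prems trav_step_mono[OF snoc.hyps(2)] by simp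
  ultimately show ?case by simp
qed (use potential_start in simp)

lemma tight_last_step:
  assumes "lattice_path P" "trav_step (last P) q" "fst q \<le> N" "snd q \<le> N"
    and "sum_list (map W (P @ [q])) = G q"
  shows "sum_list (map W P) = G (last P)" "G q = G (last P) + W q"
proof -
  have "G q \<le> G (last P) + W q"
    using potential_step[OF assms(2)] lattice_path_last_ge_1[OF assms(1)] assms(3,4) by simp
  moreover have "G (last P) \<le> sum_list (map W P)"
    using potential_le_path_weight[OF assms(1)] assms(3,4) trav_step_mono[OF assms(2)] by simp
  ultimately show "sum_list (map W P) = G (last P)" "G q = G (last P) + W q"
    using assms(5) by simp_all
qed

lemma tight_paths_unique:
  assumes tight: "\<And>p q. S q \<Longrightarrow> q \<noteq> (1, 1) \<Longrightarrow> trav_step p q \<Longrightarrow>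
                   1 \<le> fst p \<Longrightarrow> 1 \<le> snd p \<Longrightarrow> G q = G p + W q \<Longrightarrow> p = \<pi> q"
    and closed: "\<And>q. S q \<Longrightarrow> q \<noteq> (1, 1) \<Longrightarrow> S (\<pi> q)"
    and bounded: "\<And>q. S q \<Longrightarrow> fst q \<le> N \<and> snd q \<le> N"
  shows "lattice_path P \<Longrightarrow> lattice_path P' \<Longrightarrow> last P = last P' \<Longrightarrow> S (last P) \<Longrightarrow>
     sum_list (map W P) = G (last P) \<Longrightarrow> sum_list (map W P') = G (last P') \<Longrightarrow> P = P'"
proof (induction arbitrary: P' rule: lattice_path.induct)
  case start
  then show ?case using lattice_path_last_start by simp
next
  case (snoc P q)
  have "q \<noteq> (1, 1)"
    using lattice_path_last_ge_1[OF snoc.hyps(1)] trav_step_mono[OF snoc.hyps(2)] by fastforce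
  have Sq: "S q" and qN: "fst q \<le> N" "snd q \<le> N"
    using snoc.prems bounded by auto
  have pred: "last Q = \<pi> q \<and> sum_list (map W Q) = G (last Q)"
    if "lattice_path Q" "trav_step (last Q) q" "sum_list (map W (Q @ [q])) = G q" for Q
    using tight[OF Sq \<open>q \<noteq> (1, 1)\<close> that(2)] tight_last_step[OF that(1,2) qN that(3)]
      lattice_path_last_ge_1[OF that(1)] by simp
  obtain Q where P': "P' = Q @ [q]" and Q: "lattice_path Q" "trav_step (last Q) q"
    using snoc.prems(1,2) \<open>q \<noteq> (1, 1)\<close> by (cases rule: lattice_path.cases) auto
  have "last P = \<pi> q" "sum_list (map W P) = G (last P)"
    using pred[OF snoc.hyps] snoc.prems(4) by simp_all
  moreover have "last Q = \<pi> q" "sum_list (map W Q) = G (last Q)"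
    using pred[OF Q] snoc.prems(2,5) P' by simp_all
  ultimately have "P = Q"
    using snoc.IH[OF Q(1)] closed[OF Sq \<open>q \<noteq> (1, 1)\<close>] by simp
  then show ?case
    using P' by simp
qed

end

lemma sum_list_ge_length_mult:
  fixes ys :: "real list"
  shows "\<forall>x\<in>set ys. h \<le> x \<Longrightarrow> real (length ys) * h \<le> sum_list ys"
  by (induction ys) (auto simp: algebra_simps)

lemma sum_list_le_length_mult:
  fixes ys :: "real list"
  shows "\<forall>x\<in>set ys. x \<le> B \<Longrightarrow> sum_list ys \<le> real (length ys) * B"
  by (induction ys) (auto simp: algebra_simps)

lemma sorted_dropWhile_less_eq_filter:
  fixes xs :: "'a::linorder list"
  shows "sorted xs \<Longrightarrow> dropWhile (\<lambda>x. x < h) xs = filter (\<lambda>x. h \<le> x) xs"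
proof (induction xs)
  case (Cons a xs)
  have "\<forall>x\<in>set xs. h \<le> x" if "h \<le> a"
    using Cons.prems that by (auto intro: order.trans)
  then show ?case
    using Cons by auto
qed simp

lemma sum_largest_ge:
  fixes xs :: "real list"
  assumes "k \<le> length (filter (\<lambda>x. h \<le> x) xs)"
  shows "real k * h \<le> sum_list (take k (rev (sort xs)))"
proof -
  define big where "big = filter (\<lambda>x. h \<le> x) (sort xs)"
  have "rev (sort xs) = rev big @ rev (takeWhile (\<lambda>x. x < h) (sort xs))"
    unfolding big_def
    by (metis rev_append sorted_dropWhile_less_eq_filter sorted_sort takeWhile_dropWhile_id)
  moreover have "length big = length (filter (\<lambda>x. h \<le> x) xs)"
    by (simp add: big_def filter_sort)
  ultimately have "take k (rev (sort xs)) = take k (rev big)" and "length (take k (rev big)) = k"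
    using assms by simp_all
  moreover have "\<forall>x\<in>set (take k (rev big)). h \<le> x"
    by (auto simp: big_def dest: in_set_takeD)
  ultimately show ?thesis
    using sum_list_ge_length_mult[of "take k (rev big)" h] by simp
qed

lemma sum_largest_le:
  fixes xs :: "real list"
  assumes "\<forall>x\<in>set xs. x \<le> B" "0 \<le> B"
  shows "sum_list (take k (rev (sort xs))) \<le> real k * B"
proof -
  have "sum_list (take k (rev (sort xs))) \<le> real (length (take k (rev (sort xs)))) * B"
    using assms(1) by (intro sum_list_le_length_mult) (auto dest: in_set_takeD)
  also have "\<dots> \<le> real k * B"
    using assms(2) by (simp add: mult_right_mono)
  finally show ?thesis .
qed

lemma sum_list_map_of_bool:
  "sum_list (map (\<lambda>x. of_bool (P x)) xs) = (of_nat (length (filter P xs)) :: 'a::semiring_1)"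
  by (induction xs) auto

lemma Min_traversal_costs_eqI:
  assumes "\<And>T. is_traversal \<sigma> \<tau> T \<Longrightarrow> c \<le> f T" "is_traversal \<sigma> \<tau> T\<^sub>0" "f T\<^sub>0 = c"
  shows "Min {f T |T. is_traversal \<sigma> \<tau> T} = c"
proof (rule Min_eqI)
  have "{f T |T. is_traversal \<sigma> \<tau> T} = f ` {T. is_traversal \<sigma> \<tau> T}"
    by blast
  then show "finite {f T |T. is_traversal \<sigma> \<tau> T}"
    using finite_traversals by simp
qed (use assms in auto)

definition sigma_vertex :: "nat \<Rightarrow> nat \<Rightarrow> real" where
  "sigma_vertex n i =
     (if i = 1 then 0 else if i \<le> n + 1 then 2 else if i = n + 2 then 0
      else if i = n + 3 then 1 else if i = n + 4 then 0 else 1)"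

definition tau_vertex :: "nat \<Rightarrow> nat \<Rightarrow> real" where
  "tau_vertex n j =
     (if j \<le> n then 1 else if j = n + 1 then 0 else if j = n + 2 then 2
      else if j = n + 3 then 0 else if j = n + 4 then 2 else 0)"

definition curve_sigma :: "nat \<Rightarrow> real list" where
  "curve_sigma n = 0 # replicate n 2 @ [0, 1, 0, 1]"

definition curve_tau :: "nat \<Rightarrow> real list" where
  "curve_tau n = replicate n 1 @ [0, 2, 0, 2, 0]"

lemma length_curve_sigma [simp]: "length (curve_sigma n) = n + 5"
  by (simp add: curve_sigma_def)

lemma length_curve_tau [simp]: "length (curve_tau n) = n + 5"
  by (simp add: curve_tau_def)

lemma sigma_index_cases:
  "1 \<le> i \<Longrightarrow> i \<le> n + 5 \<Longrightarrow>
     (i::nat) = 1 \<or> (2 \<le> i \<and> i \<le> n + 1) \<or> i = n + 2 \<or> i = n + 3 \<or> i = n + 4 \<or> i = n + 5"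
  by linarith

lemma tau_index_cases:
  "(j::nat) \<le> n + 5 \<Longrightarrow> j \<le> n \<or> j = n + 1 \<or> j = n + 2 \<or> j = n + 3 \<or> j = n + 4 \<or> j = n + 5"
  by linarith

lemma nth_curve_sigma: "1 \<le> i \<Longrightarrow> i \<le> n + 5 \<Longrightarrow> curve_sigma n ! (i - 1) = sigma_vertex n i"
  by (drule (1) sigma_index_cases)
     (auto simp: curve_sigma_def sigma_vertex_def nth_append nth_Cons split: nat.split)

lemma nth_curve_tau: "1 \<le> j \<Longrightarrow> j \<le> n + 5 \<Longrightarrow> curve_tau n ! (j - 1) = tau_vertex n j"
  by (drule tau_index_cases) (auto simp: curve_tau_def tau_vertex_def nth_append)

definition match_dist :: "nat \<Rightarrow> nat \<times> nat \<Rightarrow> real" where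
  "match_dist n = (\<lambda>(i, j). \<bar>curve_sigma n ! (i - 1) - curve_tau n ! (j - 1)\<bar>)"

lemma matched_dists_curves: "matched_dists (curve_sigma n) (curve_tau n) T = map (match_dist n) T"
  by (simp add: matched_dists_def match_dist_def)

lemma match_dist_vertices:
  "1 \<le> i \<Longrightarrow> i \<le> n + 5 \<Longrightarrow> 1 \<le> j \<Longrightarrow> j \<le> n + 5 \<Longrightarrow>
     match_dist n (i, j) = \<bar>sigma_vertex n i - tau_vertex n j\<bar>"
  using nth_curve_sigma[of i n] nth_curve_tau[of j n] by (simp add: match_dist_def)

definition heavy :: "nat \<Rightarrow> nat \<times> nat \<Rightarrow> real" where
  "heavy n q = of_bool (1 \<le> match_dist n q)"

text \<open>The least number of heavy matches on a lattice path from (1,1) to (i,j), computed by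
  dynamic programming; only the lower bound is needed below.\<close>

definition min_heavy :: "nat \<Rightarrow> nat \<times> nat \<Rightarrow> real" where
  "min_heavy n = (\<lambda>(i, j).
     if j \<le> n then (if i \<le> n + 2 then real (max i j) else if i = n + 3 then real n + 2 else real n + 3)
     else real n +
       (if i = 1 then [0, 1, 1, 2, 2] else if i \<le> n + 1 then [1, 0, 1, 1, 2]
        else if i = n + 2 then [1, 1, 0, 1, 1] else if i = n + 3 then [2, 2, 1, 1, 2]
        else if i = n + 4 then [2, 3, 1, 2, 1] else [3, 3, 2, 2, 2]) ! (j - n - 1))"

lemma min_heavy_step:
  assumes "1 \<le> n" "trav_step (i, j) q" "1 \<le> i" "1 \<le> j" "fst q \<le> n + 5" "snd q \<le> n + 5"
  shows "min_heavy n q \<le> min_heavy n (i, j) + heavy n q"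
proof -
  have "i \<le> n + 5" "j \<le> n + 5"
    using trav_step_mono[OF assms(2)] assms(5,6) by auto
  then have cases: "i = 1 \<or> (2 \<le> i \<and> i \<le> n + 1) \<or> i = n + 2 \<or> i = n + 3 \<or> i = n + 4 \<or> i = n + 5"
      "j \<le> n \<or> j = n + 1 \<or> j = n + 2 \<or> j = n + 3 \<or> j = n + 4 \<or> j = n + 5"
    using sigma_index_cases[OF assms(3)] tau_index_cases by blast+
  from assms(2) consider "q = (i + 1, j)" | "q = (i, j + 1)" | "q = (i + 1, j + 1)"
    by (auto simp: trav_step_def)
  then show ?thesis
    using cases assms
    by cases (elim disjE; auto simp: min_heavy_def heavy_def match_dist_vertices sigma_vertex_def
        tau_vertex_def max_def)+
qed

definition optimal_traversal :: "nat \<Rightarrow> (nat \<times> nat) list" where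
  "optimal_traversal n = map (\<lambda>j. (1, j)) [1..<n + 2] @ map (\<lambda>i. (i, n + 2)) [2..<n + 2]
     @ [(n + 2, n + 3), (n + 3, n + 4), (n + 4, n + 5), (n + 5, n + 5)]"

definition optimal_cell :: "nat \<Rightarrow> nat \<times> nat \<Rightarrow> bool" where
  "optimal_cell n = (\<lambda>(i, j). (i = 1 \<and> 1 \<le> j \<and> j \<le> n + 1) \<or> (2 \<le> i \<and> i \<le> n + 1 \<and> j = n + 2)
     \<or> (i = n + 2 \<and> j = n + 3) \<or> (i = n + 3 \<and> j = n + 4) \<or> (i = n + 4 \<and> j = n + 5)
     \<or> (i = n + 5 \<and> j = n + 5))"

definition optimal_pred :: "nat \<Rightarrow> nat \<times> nat \<Rightarrow> nat \<times> nat" where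
  "optimal_pred n = (\<lambda>(i, j).
     if i = 1 then (1, j - 1) else if j = n + 2 then (if i = 2 then (1, n + 1) else (i - 1, n + 2))
     else if i = n + 2 then (n + 1, n + 2) else if i = n + 3 then (n + 2, n + 3)
     else if i = n + 4 then (n + 3, n + 4) else (n + 4, n + 5))"

definition short_traversal :: "nat \<Rightarrow> (nat \<times> nat) list" where
  "short_traversal n = (1, 1) # map (\<lambda>i. (i + 1, i)) [1..<n + 5] @ [(n + 5, n + 5)]"

lemma optimal_traversal_is_traversal:
  assumes "1 \<le> n"
  shows "is_traversal (curve_sigma n) (curve_tau n) (optimal_traversal n)"
proof -
  have "successively trav_step (map (\<lambda>j. (1, j)) [1..<n + 2])"
    "successively trav_step (map (\<lambda>i. (i, n + 2)) [2..<n + 2])"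
    by (simp_all add: successively_map successively_upt trav_step_def del: upt_Suc)
  moreover have "[2..<n + 2] \<noteq> []" "last [2..<n + 2] = n + 1" "hd [2..<n + 2] = 2"
    using assms by (simp_all add: last_upt hd_upt del: upt_Suc)
  ultimately show ?thesis
    by (simp add: is_traversal_iff lattice_path_iff optimal_traversal_def successively_append_iff
        trav_step_def hd_map last_map del: upt_Suc)
qed

lemma short_traversal_is_traversal:
  "is_traversal (curve_sigma n) (curve_tau n) (short_traversal n)"
proof -
  have "successively trav_step (map (\<lambda>i. (i + 1, i)) [1..<n + 5])"
    by (simp add: successively_map successively_upt trav_step_def del: upt_Suc)
  moreover have "last [1..<n + 5] = n + 4" "hd [1..<n + 5] = 1"
    by (simp_all add: last_upt hd_upt del: upt_Suc)
  ultimately have "successively trav_step (map (\<lambda>i. (i + 1, i)) [1..<n + 5] @ [(n + 5, n + 5)])"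
    by (simp add: successively_append_iff trav_step_def last_map del: upt_Suc)
  moreover have "trav_step (1, 1) (hd (map (\<lambda>i. (i + 1, i)) [1..<n + 5] @ [(n + 5, n + 5)]))"
    using \<open>hd [1..<n + 5] = 1\<close> by (simp add: trav_step_def hd_map del: upt_Suc)
  ultimately show ?thesis
    unfolding is_traversal_iff lattice_path_iff short_traversal_def
    by (simp add: successively_Cons del: upt_Suc)
qed

lemma length_optimal_traversal: "length (optimal_traversal n) = 2 * n + 5"
  by (simp add: optimal_traversal_def del: upt_Suc)

lemma length_short_traversal: "length (short_traversal n) = n + 6"
  by (simp add: short_traversal_def del: upt_Suc)

lemma optimal_pred_closed:
  assumes "1 \<le> n" "optimal_cell n q" "q \<noteq> (1, 1)"
  shows "optimal_cell n (optimal_pred n q)"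
proof -
  from assms(2,3) consider (row) j where "q = (1, j)" "2 \<le> j" "j \<le> n + 1"
    | (column) i where "q = (i, n + 2)" "2 \<le> i" "i \<le> n + 1"
    | "q = (n + 2, n + 3)" | "q = (n + 3, n + 4)" | "q = (n + 4, n + 5)" | "q = (n + 5, n + 5)"
    unfolding optimal_cell_def by (cases q) fastforce
  then show ?thesis
    using assms(1) by cases (auto simp: optimal_cell_def optimal_pred_def)
qed

lemma min_heavy_tight_step:
  assumes "1 \<le> n" "optimal_cell n q" "q \<noteq> (1, 1)" "trav_step p q"
    "1 \<le> fst p" "1 \<le> snd p" "min_heavy n q = min_heavy n p + heavy n q"
  shows "p = optimal_pred n q"
proof -
  obtain c d where p: "p = (c, d)" by fastforce
  have c: "1 \<le> c" "1 \<le> d"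
    using assms(5,6) p by auto
  have step: "q = (c + 1, d) \<or> q = (c, d + 1) \<or> q = (c + 1, d + 1)"
    using assms(4) by (auto simp: trav_step_def p)
  have tight: "min_heavy n q = min_heavy n (c, d) + heavy n q"
    using assms(7) p by simp
  from assms(2) consider (row) j where "q = (1, j)"
    | (col) i where "q = (i, n + 2)" "2 \<le> i" "i \<le> n + 1"
    | "q = (n + 2, n + 3)" | "q = (n + 3, n + 4)" | "q = (n + 4, n + 5)" | "q = (n + 5, n + 5)"
    by (auto simp: optimal_cell_def)
  then show ?thesis
  proof cases
    case row
    then show ?thesis
      using step c by (auto simp: optimal_pred_def p)
  next
    case col
    then show ?thesis
      using step c tight assms(1)
      by (auto simp: optimal_pred_def p min_heavy_def heavy_def match_dist_vertices
          sigma_vertex_def tau_vertex_def)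
  qed (use step c tight assms(1) in \<open>auto simp: optimal_pred_def p min_heavy_def heavy_def
      match_dist_vertices sigma_vertex_def tau_vertex_def\<close>)
qed

lemma min_heavy_lattice_potential:
  assumes "1 \<le> n"
  shows "lattice_potential (min_heavy n) (heavy n) (n + 5)"
proof
  show "min_heavy n (1, 1) \<le> heavy n (1, 1)"
    by (simp add: min_heavy_def heavy_def match_dist_vertices sigma_vertex_def tau_vertex_def)
  show "min_heavy n q \<le> min_heavy n p + heavy n q"
    if "trav_step p q" "1 \<le> fst p" "1 \<le> snd p" "fst q \<le> n + 5" "snd q \<le> n + 5" for p q
    using min_heavy_step[of n "fst p" "snd p" q] assms that by simp
qed

lemma heavy_count_ge:
  assumes "1 \<le> n" "is_traversal (curve_sigma n) (curve_tau n) T"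
  shows "real n + 2 \<le> sum_list (map (heavy n) T)"
proof -
  interpret lattice_potential "min_heavy n" "heavy n" "n + 5"
    using assms(1) by (rule min_heavy_lattice_potential)
  have "lattice_path T" "last T = (n + 5, n + 5)"
    using assms(2) by (simp_all add: is_traversal_iff)
  then have "min_heavy n (last T) \<le> sum_list (map (heavy n) T)"
    by (intro potential_le_path_weight) simp_all
  moreover have "min_heavy n (last T) = real n + 2"
    using \<open>last T = (n + 5, n + 5)\<close> by (simp add: min_heavy_def)
  ultimately show ?thesis
    by simp
qed

lemma heavy_count_le_dtw_cost:
  "sum_list (map (heavy n) T) \<le> dtw_cost (curve_sigma n) (curve_tau n) T"
  unfolding dtw_cost_def matched_dists_curves
  by (rule sum_list_mono) (simp add: heavy_def match_dist_def split: prod.split)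

lemma heavy_count_eq_length_filter:
  "sum_list (map (heavy n) T) =
     real (length (filter (\<lambda>x. 1 \<le> x) (matched_dists (curve_sigma n) (curve_tau n) T)))"
  using sum_list_map_of_bool[of "\<lambda>x. 1 \<le> x" "map (match_dist n) T"]
  by (simp add: matched_dists_curves heavy_def[abs_def] comp_def)

lemma dtw_cost_optimal_traversal:
  assumes "1 \<le> n"
  shows "dtw_cost (curve_sigma n) (curve_tau n) (optimal_traversal n) = real n + 2"
proof -
  have row: "map (match_dist n) (map (\<lambda>j. (1, j)) [1..<n + 2]) = replicate n 1 @ [0]"
    by (rule nth_equalityI)
      (auto simp: nth_append match_dist_vertices sigma_vertex_def tau_vertex_def simp del: upt_Suc)
  have column: "map (match_dist n) (map (\<lambda>i. (i, n + 2)) [2..<n + 2]) = replicate n 0"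
    by (rule nth_equalityI)
      (auto simp: match_dist_vertices sigma_vertex_def tau_vertex_def simp del: upt_Suc)
  have "map (match_dist n) (optimal_traversal n) = (replicate n 1 @ [0]) @ replicate n 0 @ [0, 1, 0, 1]"
    unfolding optimal_traversal_def map_append row column
    using assms by (simp add: match_dist_vertices sigma_vertex_def tau_vertex_def)
  then show ?thesis
    by (simp add: dtw_cost_def matched_dists_curves sum_list_replicate)
qed

lemma short_traversal_dists_le_1:
  assumes "x \<in> set (matched_dists (curve_sigma n) (curve_tau n) (short_traversal n))"
  shows "x \<le> 1"
proof -
  have "match_dist n (i + 1, i) \<le> 1" if "1 \<le> i" "i < n + 5" for i
    using sigma_index_cases[of "i + 1" n] that
    by (auto simp: match_dist_vertices sigma_vertex_def tau_vertex_def)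
  moreover have "match_dist n (1, 1) \<le> 1" "match_dist n (n + 5, n + 5) \<le> 1"
    by (simp_all add: match_dist_vertices sigma_vertex_def tau_vertex_def)
  ultimately show ?thesis
    using assms by (auto simp: matched_dists_curves short_traversal_def simp del: upt_Suc)
qed

lemma d_DTW_curves:
  assumes "1 \<le> n"
  shows "d_DTW (curve_sigma n) (curve_tau n) = real n + 2"
  unfolding d_DTW_def
proof (rule Min_traversal_costs_eqI[where T\<^sub>0 = "optimal_traversal n"])
  show "real n + 2 \<le> dtw_cost (curve_sigma n) (curve_tau n) T"
    if "is_traversal (curve_sigma n) (curve_tau n) T" for T
    using heavy_count_ge[OF assms that] heavy_count_le_dtw_cost[of n T] by simp
qed (use assms optimal_traversal_is_traversal dtw_cost_optimal_traversal in simp_all)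

lemma min_heavy_paths_unique:
  assumes "1 \<le> n" "lattice_path P" "lattice_path P'" "last P = (n + 5, n + 5)" "last P' = (n + 5, n + 5)"
    "sum_list (map (heavy n) P) = real n + 2" "sum_list (map (heavy n) P') = real n + 2"
  shows "P = P'"
proof -
  interpret lattice_potential "min_heavy n" "heavy n" "n + 5"
    using assms(1) by (rule min_heavy_lattice_potential)
  show ?thesis
  proof (rule tight_paths_unique[where S = "optimal_cell n" and \<pi> = "optimal_pred n"])
    show "p = optimal_pred n q"
      if "optimal_cell n q" "q \<noteq> (1, 1)" "trav_step p q" "1 \<le> fst p" "1 \<le> snd p"
        "min_heavy n q = min_heavy n p + heavy n q" for p q
      using assms(1) that by (rule min_heavy_tight_step)
    show "optimal_cell n (optimal_pred n q)" if "optimal_cell n q" "q \<noteq> (1, 1)" for q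
      using assms(1) that by (rule optimal_pred_closed)
    show "fst q \<le> n + 5 \<and> snd q \<le> n + 5" if "optimal_cell n q" for q
      using that by (auto simp: optimal_cell_def split: prod.splits)
  qed (use assms in \<open>simp_all add: optimal_cell_def min_heavy_def\<close>)
qed

lemma realizes_DTW_curves_iff:
  assumes "1 \<le> n"
  shows "realizes_DTW (curve_sigma n) (curve_tau n) T \<longleftrightarrow> T = optimal_traversal n"
proof -
  have optimal: "realizes_DTW (curve_sigma n) (curve_tau n) (optimal_traversal n)"
    using assms optimal_traversal_is_traversal dtw_cost_optimal_traversal d_DTW_curves
    by (simp add: realizes_DTW_def)
  have tight: "lattice_path T' \<and> last T' = (n + 5, n + 5) \<and> sum_list (map (heavy n) T') = real n + 2"
    if "realizes_DTW (curve_sigma n) (curve_tau n) T'" for T'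
  proof -
    have T': "is_traversal (curve_sigma n) (curve_tau n) T'"
      and cost: "dtw_cost (curve_sigma n) (curve_tau n) T' = real n + 2"
      using that d_DTW_curves[OF assms] by (simp_all add: realizes_DTW_def)
    then show ?thesis
      using heavy_count_ge[OF assms T'] heavy_count_le_dtw_cost[of n T']
      by (simp add: is_traversal_iff)
  qed
  show ?thesis
    using min_heavy_paths_unique[OF assms] tight optimal by blast
qed

lemma kdtw_cost_curves_ge:
  assumes "1 \<le> n" "k \<le> n + 2" "is_traversal (curve_sigma n) (curve_tau n) T"
  shows "real k \<le> kdtw_cost k (curve_sigma n) (curve_tau n) T"
proof -
  have "k \<le> length (filter (\<lambda>x. 1 \<le> x) (matched_dists (curve_sigma n) (curve_tau n) T))"
    using heavy_count_ge[OF assms(1,3)] assms(2) by (simp add: heavy_count_eq_length_filter)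
  then show ?thesis
    using sum_largest_ge[where h = 1] by (simp add: kdtw_cost_def)
qed

lemma kdtw_cost_short_traversal:
  assumes "1 \<le> n" "k \<le> n + 2"
  shows "kdtw_cost k (curve_sigma n) (curve_tau n) (short_traversal n) = real k"
proof (rule antisym)
  show "kdtw_cost k (curve_sigma n) (curve_tau n) (short_traversal n) \<le> real k"
    using sum_largest_le[where B = 1] short_traversal_dists_le_1 by (simp add: kdtw_cost_def)
qed (use kdtw_cost_curves_ge[OF assms short_traversal_is_traversal] in simp)

lemma realizes_kDTW_short_traversal:
  assumes "1 \<le> n" "k \<le> n + 2"
  shows "realizes_kDTW k (curve_sigma n) (curve_tau n) (short_traversal n)"
proof -
  have "d_kDTW k (curve_sigma n) (curve_tau n) = real k"
    unfolding d_kDTW_def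
    by (rule Min_traversal_costs_eqI[where T\<^sub>0 = "short_traversal n"])
      (use assms kdtw_cost_curves_ge short_traversal_is_traversal kdtw_cost_short_traversal in simp_all)
  then show ?thesis
    using assms short_traversal_is_traversal kdtw_cost_short_traversal
    by (simp add: realizes_kDTW_def)
qed

theorem lemmaA5:
  shows "\<exists>M::nat. \<forall>m\<ge>M. \<exists>\<sigma> \<tau> :: real list.
     length \<sigma> = m \<and> length \<tau> = m \<and>
     (\<exists>T. realizes_DTW \<sigma> \<tau> T \<and> length T = 2 * m - 5 \<and>
          (\<forall>T'. realizes_DTW \<sigma> \<tau> T' \<longrightarrow> T' = T)) \<and>
     (\<forall>k. 1 \<le> k \<and> k \<le> m - 3 \<longrightarrow> (\<exists>T. realizes_kDTW k \<sigma> \<tau> T \<and> length T = m + 1))"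
proof (rule exI[of _ 6], intro allI impI)
  fix m :: nat
  assume "6 \<le> m"
  define n where "n = m - 5"
  have n: "m = n + 5" "1 \<le> n"
    using \<open>6 \<le> m\<close> by (simp_all add: n_def)
  have "\<exists>T. realizes_DTW (curve_sigma n) (curve_tau n) T \<and> length T = 2 * m - 5 \<and>
      (\<forall>T'. realizes_DTW (curve_sigma n) (curve_tau n) T' \<longrightarrow> T' = T)"
    using realizes_DTW_curves_iff[OF n(2)]
    by (intro exI[of _ "optimal_traversal n"]) (simp add: n(1) length_optimal_traversal)
  moreover have "\<exists>T. realizes_kDTW k (curve_sigma n) (curve_tau n) T \<and> length T = m + 1"
    if "k \<le> m - 3" for k
    using realizes_kDTW_short_traversal[OF n(2)] that
    by (intro exI[of _ "short_traversal n"]) (simp add: n(1) length_short_traversal)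
  ultimately show "\<exists>\<sigma> \<tau> :: real list. length \<sigma> = m \<and> length \<tau> = m \<and>
     (\<exists>T. realizes_DTW \<sigma> \<tau> T \<and> length T = 2 * m - 5 \<and>
          (\<forall>T'. realizes_DTW \<sigma> \<tau> T' \<longrightarrow> T' = T)) \<and>
     (\<forall>k. 1 \<le> k \<and> k \<le> m - 3 \<longrightarrow> (\<exists>T. realizes_kDTW k \<sigma> \<tau> T \<and> length T = m + 1))"
    by (intro exI[of _ "curve_sigma n"] exI[of _ "curve_tau n"]) (simp add: n(1))
qed

end
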